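(* Let $\mathcal{Z}$ be a data space with unknown distribution $\mu$, let $S=(Z_1,\dots,Z_n)$ have i.i.d. entries $Z_i\sim\mu$, let the learning algorithm be a Markov kernel $P_{W|S}$ producing a hypothesis $W$ in a hypothesis class $\mathcal{W}$, with $P_W$ the marginal of $W$ and $P_{W,Z_i}$ the joint law of $(W,Z_i)$. Let $l:\mathcal{W}\times\mathcal{Z}\to\mathbb{R}^+$ be a loss function. For each $i=1,\dots,n$ let $\widehat{P}_{W,Z_i}$ be a joint distribution on $\mathcal{W}\times\mathcal{Z}$ such that, when $(W,Z_i)\sim\widehat{P}_{W,Z_i}$, the random variable $l(W,Z_i)$ is $\sigma$-subgaussian. Let $A_i=KL(P_W\otimes\mu\,\|\,\widehat{P}_{W,Z_i})$ and $B_i=KL(P_{W,Z_i}\,\|\,\widehat{P}_{W,Z_i})$. Then $$|\overline{\text{gen}}(P_{W|S},\mu)|\le\frac2n\sum_{i=1}^n\sqrt{\sigma^2(A_i+B_i)}.$$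
   Context: A random variable $X$ is $\sigma$-subgaussian if $\mathbb{E}[e^{\lambda(X-\mathbb{E}X)}]\le e^{\lambda^2\sigma^2/2}$ for all $\lambda\in\mathbb{R}$. Expected generalization error: $\overline{\text{gen}}(P_{W|S},\mu)=\mathbb{E}_{P_{W,S}}\big[\int l(W,z)\,\mu(dz)-\frac1n\sum_{i=1}^n l(W,Z_i)\big]$. $KL$ denotes the Kullback–Leibler divergence with natural logarithm; $P_W\otimes\mu$ is the product measure. *)

theory Defs
  imports "HOL-Probability.Probability"
begin

definition KLdiv :: "'a measure \<Rightarrow> 'a measure \<Rightarrow> ereal" where
  "KLdiv P Q =
     (if absolutely_continuous Q P \<and> integrable P (\<lambda>x. ln (enn2real (RN_deriv Q P x)))
      then ereal (\<integral>x. ln (enn2real (RN_deriv Q P x)) \<partial>P)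
      else \<infinity>)"

definition subgaussian :: "'a measure \<Rightarrow> ('a \<Rightarrow> real) \<Rightarrow> real \<Rightarrow> bool" where
  "subgaussian M X \<sigma> \<longleftrightarrow> integrable M X \<and>
     (\<forall>t::real. integrable M (\<lambda>x. exp (t * (X x - (\<integral>y. X y \<partial>M)))) \<and>
        (\<integral>x. exp (t * (X x - (\<integral>y. X y \<partial>M))) \<partial>M) \<le> exp (t\<^sup>2 * \<sigma>\<^sup>2 / 2))"

abbreviation sample_space :: "nat \<Rightarrow> 'z measure \<Rightarrow> (nat \<Rightarrow> 'z) measure" where
  "sample_space n Z \<equiv> PiM {..<n} (\<lambda>_. Z)"

abbreviation sample_law :: "nat \<Rightarrow> 'z measure \<Rightarrow> (nat \<Rightarrow> 'z) measure" where
  "sample_law n \<mu> \<equiv> PiM {..<n} (\<lambda>_. \<mu>)"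

definition joint_WS :: "nat \<Rightarrow> 'w measure \<Rightarrow> 'z measure \<Rightarrow> 'z measure
    \<Rightarrow> ((nat \<Rightarrow> 'z) \<Rightarrow> 'w measure) \<Rightarrow> ('w \<times> (nat \<Rightarrow> 'z)) measure" where
  "joint_WS n W Z \<mu> K =
     sample_law n \<mu> \<bind> (\<lambda>s. distr (K s) (W \<Otimes>\<^sub>M sample_space n Z) (\<lambda>w. (w, s)))"

definition marg_W :: "nat \<Rightarrow> 'w measure \<Rightarrow> 'z measure \<Rightarrow> 'z measure
    \<Rightarrow> ((nat \<Rightarrow> 'z) \<Rightarrow> 'w measure) \<Rightarrow> 'w measure" where
  "marg_W n W Z \<mu> K = distr (joint_WS n W Z \<mu> K) W fst"

definition joint_WZi :: "nat \<Rightarrow> 'w measure \<Rightarrow> 'z measure \<Rightarrow> 'z measure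
    \<Rightarrow> ((nat \<Rightarrow> 'z) \<Rightarrow> 'w measure) \<Rightarrow> nat \<Rightarrow> ('w \<times> 'z) measure" where
  "joint_WZi n W Z \<mu> K i = distr (joint_WS n W Z \<mu> K) (W \<Otimes>\<^sub>M Z) (\<lambda>(w, s). (w, s i))"

definition exp_gen :: "nat \<Rightarrow> 'w measure \<Rightarrow> 'z measure \<Rightarrow> 'z measure
    \<Rightarrow> ((nat \<Rightarrow> 'z) \<Rightarrow> 'w measure) \<Rightarrow> ('w \<Rightarrow> 'z \<Rightarrow> real) \<Rightarrow> real" where
  "exp_gen n W Z \<mu> K l =
     (\<integral>ws. ((\<integral>z. l (fst ws) z \<partial>\<mu>) - (1 / real n) * (\<Sum>i<n. l (fst ws) (snd ws i)))
        \<partial>(joint_WS n W Z \<mu> K))"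

end

theory Submission
  imports Defs
begin

(* The gap of the i-th sample point is the difference of the mean loss under P_W x mu and under
   P_{W,Z_i}; compare both with the mean under the reference law Phat_i. For any P << Q, the
   Donsker-Varadhan inequality  E_P f <= KL(P || Q) + ln E_Q (exp f),  applied to
   f = t (l - E_Q l) and combined with the sub-Gaussian bound on E_Q (exp f), gives
   t (E_P l - E_Q l) <= KL(P || Q) + t^2 sigma^2 / 2 for all t, hence
   |E_P l - E_Q l| <= sqrt (2 sigma^2 KL(P || Q)). The triangle inequality and
   sqrt a + sqrt b <= sqrt (2 (a + b)) then bound the i-th gap by 2 sqrt (sigma^2 (A_i + B_i)). *)

lemma sqrt_add_le_sqrt_double:
  fixes a b :: real
  assumes "a \<ge> 0" "b \<ge> 0"
  shows "sqrt a + sqrt b \<le> sqrt (2 * (a + b))"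
proof (rule real_le_rsqrt)
  have "0 \<le> (sqrt a - sqrt b)\<^sup>2" by simp
  then show "(sqrt a + sqrt b)\<^sup>2 \<le> 2 * (a + b)"
    using assms by (simp add: power2_eq_square algebra_simps)
qed

lemma abs_diff_le_two_sqrt:
  fixes x y z s a b :: real
  assumes "\<bar>x - z\<bar> \<le> sqrt (2 * s\<^sup>2 * a)" and "\<bar>y - z\<bar> \<le> sqrt (2 * s\<^sup>2 * b)"
    and "0 \<le> a" and "0 \<le> b"
  shows "\<bar>x - y\<bar> \<le> 2 * sqrt (s\<^sup>2 * (a + b))"
proof -
  have "\<bar>x - y\<bar> \<le> sqrt (2 * s\<^sup>2 * a) + sqrt (2 * s\<^sup>2 * b)"
    using assms(1,2) by linarith
  also have "\<dots> \<le> sqrt (2 * (2 * s\<^sup>2 * a + 2 * s\<^sup>2 * b))"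
    using assms(3,4) by (intro sqrt_add_le_sqrt_double) simp_all
  also have "2 * (2 * s\<^sup>2 * a + 2 * s\<^sup>2 * b) = 2\<^sup>2 * (s\<^sup>2 * (a + b))"
    by (simp add: algebra_simps)
  finally show ?thesis by (simp add: real_sqrt_mult)
qed

lemma abs_mean_le:
  fixes x b :: "nat \<Rightarrow> real"
  assumes "\<And>i. i < n \<Longrightarrow> \<bar>x i\<bar> \<le> b i"
  shows "\<bar>(1 / real n) * (\<Sum>i<n. x i)\<bar> \<le> (1 / real n) * (\<Sum>i<n. b i)"
proof -
  have "\<bar>(1 / real n) * (\<Sum>i<n. x i)\<bar> \<le> (1 / real n) * (\<Sum>i<n. \<bar>x i\<bar>)"
    by (simp add: abs_mult sum_abs divide_right_mono)
  also have "\<dots> \<le> (1 / real n) * (\<Sum>i<n. b i)"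
    using assms by (intro mult_left_mono sum_mono) auto
  finally show ?thesis .
qed

lemma abs_le_sqrt_if_linear_le_quadratic:
  fixes a D s :: real
  assumes le: "\<And>t. t * a \<le> D + t\<^sup>2 * s\<^sup>2 / 2"
  shows "\<bar>a\<bar> \<le> sqrt (2 * s\<^sup>2 * D)"
proof (cases "s = 0")
  case True
  have "a = 0"
  proof (rule ccontr)
    assume "a \<noteq> 0"
    then show False using le[of "(D + 1) / a"] True by simp
  qed
  then show ?thesis using le[of 0] by simp
next
  case False
  then have s2: "s\<^sup>2 > 0" by simp
  have "(a / s\<^sup>2) * a = a\<^sup>2 / s\<^sup>2" by (simp add: power2_eq_square)
  moreover have "(a / s\<^sup>2)\<^sup>2 * s\<^sup>2 / 2 = a\<^sup>2 / s\<^sup>2 / 2"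
    using s2 by (simp add: power2_eq_square)
  moreover have "(a / s\<^sup>2) * a \<le> D + (a / s\<^sup>2)\<^sup>2 * s\<^sup>2 / 2" by (rule le)
  ultimately have "a\<^sup>2 / s\<^sup>2 \<le> D + a\<^sup>2 / s\<^sup>2 / 2" by linarith
  then have "a\<^sup>2 \<le> 2 * s\<^sup>2 * D" using s2 by (simp add: field_simps)
  then show ?thesis by (metis real_sqrt_abs real_sqrt_le_mono)
qed

lemma integral_exp_pos:
  fixes f :: "'a \<Rightarrow> real"
  assumes "prob_space M" "integrable M (\<lambda>x. exp (f x))"
  shows "0 < (\<integral>x. exp (f x) \<partial>M)"
proof -
  have "(\<integral>x. exp (f x) \<partial>M) \<noteq> 0"
    using integral_nonneg_eq_0_iff_AE[OF assms(2)] prob_space.AE_False[OF assms(1)] by simp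
  then show ?thesis by (simp add: order_less_le)
qed

lemma KLdiv_finiteD:
  assumes "KLdiv P Q \<noteq> \<infinity>"
  shows "absolutely_continuous Q P"
    and "integrable P (\<lambda>x. ln (enn2real (RN_deriv Q P x)))"
    and "real_of_ereal (KLdiv P Q) = (\<integral>x. ln (enn2real (RN_deriv Q P x)) \<partial>P)"
  using assms by (auto simp: KLdiv_def split: if_splits)

lemma AE_RN_deriv_pos:
  assumes P: "sigma_finite_measure P" and Q: "sigma_finite_measure Q"
    and ac: "absolutely_continuous Q P" and sets_eq: "sets P = sets Q"
  shows "AE x in P. 0 < enn2real (RN_deriv Q P x)"
proof -
  have "AE x in density Q (RN_deriv Q P). RN_deriv Q P x \<noteq> 0"
    by (subst AE_density) auto
  then have "AE x in P. RN_deriv Q P x \<noteq> 0"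
    using sigma_finite_measure.density_RN_deriv[OF Q ac sets_eq] by metis
  moreover have "AE x in P. RN_deriv Q P x \<noteq> \<infinity>"
    by (rule absolutely_continuous_AE[OF sets_eq ac sigma_finite_measure.RN_deriv_finite[OF Q P ac sets_eq]])
  ultimately show ?thesis
    by eventually_elim (auto simp: enn2real_positive_iff less_top[symmetric] zero_less_iff_neq_zero)
qed

(* ln y <= y - 1 at y = exp (f x) / (g x * c); since P = g Q, this ratio has P-mean at most 1. *)
lemma donsker_varadhan_pointwise:
  fixes P Q :: "'a measure" and f :: "'a \<Rightarrow> real"
  defines "g \<equiv> \<lambda>x. enn2real (RN_deriv Q P x)" and "c \<equiv> \<integral>x. exp (f x) \<partial>Q"
  assumes P: "prob_space P" and Q: "prob_space Q" and sets_eq: "sets P = sets Q"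
    and ac: "absolutely_continuous Q P"
    and f[measurable]: "f \<in> borel_measurable Q" and exp_f: "integrable Q (\<lambda>x. exp (f x))"
  shows "integrable P (\<lambda>x. exp (f x) / (g x * c))"
    and "(\<integral>x. exp (f x) / (g x * c) \<partial>P) \<le> 1"
    and "AE x in P. f x \<le> ln (g x) + ln c + exp (f x) / (g x * c) - 1"
proof -
  interpret P: prob_space P by fact
  interpret Q: prob_space Q by fact
  have c_pos: "c > 0" unfolding c_def by (rule integral_exp_pos[OF Q exp_f])
  have [measurable]: "g \<in> borel_measurable Q" unfolding g_def by measurable
  have h_meas: "(\<lambda>x. exp (f x) / (g x * c)) \<in> borel_measurable Q" by measurable
  have gh_eq: "g x * (exp (f x) / (g x * c)) = (if g x = 0 then 0 else exp (f x) / c)" for x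
    by auto
  have int_exp_c: "integrable Q (\<lambda>x. exp (f x) / c)" using exp_f by simp
  have int_gh: "integrable Q (\<lambda>x. g x * (exp (f x) / (g x * c)))"
  proof (rule Bochner_Integration.integrable_bound[OF int_exp_c])
    show "(\<lambda>x. g x * (exp (f x) / (g x * c))) \<in> borel_measurable Q" by measurable
    show "AE x in Q. norm (g x * (exp (f x) / (g x * c))) \<le> norm (exp (f x) / c)"
      by (intro AE_I2) (simp add: gh_eq)
  qed
  note RN = Q.RN_deriv_integrable[OF P.sigma_finite_measure_axioms ac sets_eq h_meas]
    Q.RN_deriv_integral[OF P.sigma_finite_measure_axioms ac sets_eq h_meas]
  show "integrable P (\<lambda>x. exp (f x) / (g x * c))"
    using RN(1) int_gh unfolding g_def by simp
  have "(\<integral>x. exp (f x) / (g x * c) \<partial>P) = (\<integral>x. g x * (exp (f x) / (g x * c)) \<partial>Q)"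
    using RN(2) unfolding g_def by simp
  also have "\<dots> \<le> (\<integral>x. exp (f x) / c \<partial>Q)"
    using c_pos by (intro integral_mono[OF int_gh int_exp_c]) (auto simp: gh_eq g_def)
  also have "\<dots> = 1" using c_pos unfolding c_def by simp
  finally show "(\<integral>x. exp (f x) / (g x * c) \<partial>P) \<le> 1" .
  have "AE x in P. g x > 0" unfolding g_def
    by (rule AE_RN_deriv_pos[OF P.sigma_finite_measure_axioms Q.sigma_finite_measure_axioms ac sets_eq])
  then show "AE x in P. f x \<le> ln (g x) + ln c + exp (f x) / (g x * c) - 1"
  proof eventually_elim
    case (elim x)
    have "ln (exp (f x) / (g x * c)) \<le> exp (f x) / (g x * c) - 1"
      using elim c_pos by (intro ln_le_minus_one) simp
    moreover have "ln (exp (f x) / (g x * c)) = f x - ln (g x) - ln c"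
      using elim c_pos by (simp add: ln_div ln_mult)
    ultimately show ?case by simp
  qed
qed

lemma KLdiv_donsker_varadhan:
  fixes f :: "'a \<Rightarrow> real"
  assumes P: "prob_space P" and Q: "prob_space Q" and sets_eq: "sets P = sets Q"
    and fin: "KLdiv P Q \<noteq> \<infinity>"
    and f: "f \<in> borel_measurable Q" and exp_f: "integrable Q (\<lambda>x. exp (f x))"
    and int_f: "integrable P f"
  shows "(\<integral>x. f x \<partial>P) \<le> real_of_ereal (KLdiv P Q) + ln (\<integral>x. exp (f x) \<partial>Q)"
proof -
  interpret P: prob_space P by fact
  define g where "g = (\<lambda>x. enn2real (RN_deriv Q P x))"
  define c where "c = (\<integral>x. exp (f x) \<partial>Q)"
  define h where "h = (\<lambda>x. exp (f x) / (g x * c))"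
  note DV = donsker_varadhan_pointwise[OF P Q sets_eq KLdiv_finiteD(1)[OF fin] f exp_f]
  have int_ln_g: "integrable P (\<lambda>x. ln (g x))"
    using KLdiv_finiteD(2)[OF fin] unfolding g_def .
  have int_h: "integrable P h"
    using DV(1) unfolding h_def g_def c_def .
  have int_bound: "integrable P (\<lambda>x. ln (g x) + ln c + h x - 1)"
    using int_h int_ln_g by simp
  have AE_bound: "AE x in P. f x \<le> ln (g x) + ln c + h x - 1"
    using DV(3) unfolding h_def g_def c_def .
  have "(\<integral>x. f x \<partial>P) \<le> (\<integral>x. ln (g x) + ln c + h x - 1 \<partial>P)"
    by (rule integral_mono_AE[OF int_f int_bound AE_bound])
  also have "\<dots> = (\<integral>x. ln (g x) \<partial>P) + ln c + (\<integral>x. h x \<partial>P) - 1"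
    using int_h int_ln_g by (simp add: P.prob_space)
  also have "\<dots> \<le> real_of_ereal (KLdiv P Q) + ln c"
    using DV(2) KLdiv_finiteD(3)[OF fin] unfolding h_def g_def c_def by simp
  finally show ?thesis unfolding c_def .
qed

lemma KLdiv_nonneg:
  assumes "prob_space P" "prob_space Q" "sets P = sets Q" "KLdiv P Q \<noteq> \<infinity>"
  shows "0 \<le> real_of_ereal (KLdiv P Q)"
proof -
  have "(\<integral>x. 0 \<partial>P) \<le> real_of_ereal (KLdiv P Q) + ln (\<integral>x. exp 0 \<partial>Q)"
    using prob_space.finite_measure[OF assms(2)]
    by (intro KLdiv_donsker_varadhan[OF assms]) (auto intro: finite_measure.integrable_const)
  then show ?thesis using prob_space.prob_space[OF assms(2)] by simp
qed

lemma integrable_if_KLdiv_finite: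
  fixes f :: "'a \<Rightarrow> real"
  assumes P: "prob_space P" and Q: "prob_space Q" and sets_eq: "sets P = sets Q"
    and fin: "KLdiv P Q \<noteq> \<infinity>" and f[measurable]: "f \<in> borel_measurable Q"
    and exp_f: "integrable Q (\<lambda>x. exp (f x))" and exp_minus_f: "integrable Q (\<lambda>x. exp (- f x))"
  shows "integrable P f"
proof -
  interpret P: prob_space P by fact
  define g where "g = (\<lambda>x. enn2real (RN_deriv Q P x))"
  define B where "B = (\<lambda>u x. ln (g x) + ln (\<integral>y. exp (u y) \<partial>Q)
      + exp (u x) / (g x * (\<integral>y. exp (u y) \<partial>Q)) - 1)"
  note DV = donsker_varadhan_pointwise[OF P Q sets_eq KLdiv_finiteD(1)[OF fin]]
  have int_ln_g: "integrable P (\<lambda>x. ln (g x))"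
    using KLdiv_finiteD(2)[OF fin] unfolding g_def .
  have int_B: "integrable P (B u)" and AE_B: "AE x in P. u x \<le> B u x"
    if "u \<in> borel_measurable Q" "integrable Q (\<lambda>x. exp (u x))" for u
  proof -
    have "integrable P (\<lambda>x. exp (u x) / (g x * (\<integral>y. exp (u y) \<partial>Q)))"
      using DV(1)[OF that] unfolding g_def .
    then show "integrable P (B u)" using int_ln_g unfolding B_def by simp
    show "AE x in P. u x \<le> B u x" using DV(3)[OF that] unfolding B_def g_def .
  qed
  have minus_f: "(\<lambda>x. - f x) \<in> borel_measurable Q" by measurable
  have int_sum: "integrable P (\<lambda>x. \<bar>B f x\<bar> + \<bar>B (\<lambda>x. - f x) x\<bar>)"
    by (intro Bochner_Integration.integrable_add integrable_abs int_B f exp_f minus_f exp_minus_f)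
  have AE_sum: "AE x in P. norm (f x) \<le> norm (\<bar>B f x\<bar> + \<bar>B (\<lambda>x. - f x) x\<bar>)"
    using AE_B[OF f exp_f] AE_B[OF minus_f exp_minus_f] by eventually_elim (smt (verit) real_norm_def)
  have "f \<in> borel_measurable P" using f measurable_cong_sets[OF sets_eq refl] by blast
  then show ?thesis by (rule Bochner_Integration.integrable_bound[OF int_sum _ AE_sum])
qed

lemma subgaussian_KLdiv_deviation:
  fixes X :: "'a \<Rightarrow> real"
  assumes P: "prob_space P" and Q: "prob_space Q" and sets_eq: "sets P = sets Q"
    and fin: "KLdiv P Q \<noteq> \<infinity>"
    and X[measurable]: "X \<in> borel_measurable Q" and subg: "subgaussian Q X \<sigma>"
  shows "integrable P X"
    and "\<bar>(\<integral>x. X x \<partial>P) - (\<integral>x. X x \<partial>Q)\<bar> \<le> sqrt (2 * \<sigma>\<^sup>2 * real_of_ereal (KLdiv P Q))"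
proof -
  interpret P: prob_space P by fact
  define m where "m = (\<integral>x. X x \<partial>Q)"
  have exp_int: "integrable Q (\<lambda>x. exp (t * (X x - m)))"
    and mgf: "(\<integral>x. exp (t * (X x - m)) \<partial>Q) \<le> exp (t\<^sup>2 * \<sigma>\<^sup>2 / 2)" for t
    using subg unfolding subgaussian_def m_def by auto
  have "integrable P (\<lambda>x. X x - m)"
    using exp_int[of 1] exp_int[of "-1"]
    by (intro integrable_if_KLdiv_finite[OF P Q sets_eq fin]) simp_all
  then show int_X: "integrable P X"
    using Bochner_Integration.integrable_add[OF _ P.integrable_const[of m]] by fastforce
  have "t * ((\<integral>x. X x \<partial>P) - m) \<le> real_of_ereal (KLdiv P Q) + t\<^sup>2 * \<sigma>\<^sup>2 / 2" for t
  proof -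
    have "t * ((\<integral>x. X x \<partial>P) - m) = (\<integral>x. t * (X x - m) \<partial>P)"
      using int_X by (simp add: algebra_simps P.prob_space)
    also have "\<dots> \<le> real_of_ereal (KLdiv P Q) + ln (\<integral>x. exp (t * (X x - m)) \<partial>Q)"
      using int_X exp_int by (intro KLdiv_donsker_varadhan[OF P Q sets_eq fin]) auto
    also have "\<dots> \<le> real_of_ereal (KLdiv P Q) + t\<^sup>2 * \<sigma>\<^sup>2 / 2"
      using mgf[of t] integral_exp_pos[OF Q exp_int[of t]] by (metis add_left_mono ln_exp ln_le_cancel_iff exp_gt_zero)
    finally show ?thesis .
  qed
  then show "\<bar>(\<integral>x. X x \<partial>P) - (\<integral>x. X x \<partial>Q)\<bar> \<le> sqrt (2 * \<sigma>\<^sup>2 * real_of_ereal (KLdiv P Q))"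
    unfolding m_def by (rule abs_le_sqrt_if_linear_le_quadratic)
qed

locale learning_setup =
  fixes n :: nat and W :: "'w measure" and Z :: "'z measure" and \<mu> :: "'z measure"
    and K :: "(nat \<Rightarrow> 'z) \<Rightarrow> 'w measure"
  assumes prob_space_\<mu>: "prob_space \<mu>" and sets_\<mu>: "sets \<mu> = sets Z"
    and K_meas: "K \<in> sample_space n Z \<rightarrow>\<^sub>M prob_algebra W"
begin

abbreviation "P_WS \<equiv> joint_WS n W Z \<mu> K"
abbreviation "P_W \<equiv> marg_W n W Z \<mu> K"
abbreviation "P_WZ \<equiv> joint_WZi n W Z \<mu> K"

lemma sets_sample_law: "sets (sample_law n \<mu>) = sets (sample_space n Z)"
  by (rule sets_PiM_cong) (auto simp: sets_\<mu>)

lemma sample_law_in_prob_algebra: "sample_law n \<mu> \<in> space (prob_algebra (sample_law n \<mu>))"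
  using prob_space_PiM[OF prob_space_\<mu>] by (simp add: space_prob_algebra)

lemma measurable_joint_kernel:
  "(\<lambda>s. distr (K s) (W \<Otimes>\<^sub>M sample_space n Z) (\<lambda>w. (w, s)))
     \<in> sample_law n \<mu> \<rightarrow>\<^sub>M prob_algebra (W \<Otimes>\<^sub>M sample_space n Z)"
proof (rule measurable_prob_algebraI)
  have K: "K \<in> sample_law n \<mu> \<rightarrow>\<^sub>M prob_algebra W"
    using K_meas measurable_cong_sets[OF sets_sample_law refl] by blast
  have "(\<lambda>(s, w). (w, s)) \<in> sample_space n Z \<Otimes>\<^sub>M W \<rightarrow>\<^sub>M W \<Otimes>\<^sub>M sample_space n Z"
    by measurable
  then have "(\<lambda>(s, w). (w, s)) \<in> sample_law n \<mu> \<Otimes>\<^sub>M W \<rightarrow>\<^sub>M W \<Otimes>\<^sub>M sample_space n Z"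
    using measurable_cong_sets[OF sets_pair_measure_cong[OF sets_sample_law refl] refl] by blast
  then show "(\<lambda>s. distr (K s) (W \<Otimes>\<^sub>M sample_space n Z) (\<lambda>w. (w, s)))
      \<in> sample_law n \<mu> \<rightarrow>\<^sub>M subprob_algebra (W \<Otimes>\<^sub>M sample_space n Z)"
    using measurable_distr2[where f="\<lambda>s w. (w, s)", OF _ measurable_prob_algebraD[OF K]] by simp
next
  fix s assume s: "s \<in> space (sample_law n \<mu>)"
  then have "K s \<in> space (prob_algebra W)" using K_meas sets_eq_imp_space_eq[OF sets_sample_law]
    by (auto intro: measurable_space)
  then have Ks: "prob_space (K s)" "sets (K s) = sets W" by (auto simp: space_prob_algebra)
  have "s \<in> space (sample_space n Z)" using s sets_eq_imp_space_eq[OF sets_sample_law] by simp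
  then have "(\<lambda>w. (w, s)) \<in> W \<rightarrow>\<^sub>M W \<Otimes>\<^sub>M sample_space n Z" by measurable
  then have "(\<lambda>w. (w, s)) \<in> K s \<rightarrow>\<^sub>M W \<Otimes>\<^sub>M sample_space n Z"
    using measurable_cong_sets[OF Ks(2) refl] by blast
  then show "prob_space (distr (K s) (W \<Otimes>\<^sub>M sample_space n Z) (\<lambda>w. (w, s)))"
    using Ks(1) prob_space.prob_space_distr by blast
qed

lemma prob_space_joint_WS: "prob_space P_WS"
  unfolding joint_WS_def by (rule prob_space_bind'[OF sample_law_in_prob_algebra measurable_joint_kernel])

lemma sets_joint_WS: "sets P_WS = sets (W \<Otimes>\<^sub>M sample_space n Z)"
  unfolding joint_WS_def by (rule sets_bind'[OF sample_law_in_prob_algebra measurable_joint_kernel])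

lemma measurable_fst_joint_WS: "fst \<in> P_WS \<rightarrow>\<^sub>M W"
  unfolding measurable_cong_sets[OF sets_joint_WS refl] by measurable

lemma measurable_coordinate_joint_WS:
  assumes "i < n"
  shows "(\<lambda>(w, s). (w, s i)) \<in> P_WS \<rightarrow>\<^sub>M W \<Otimes>\<^sub>M Z"
  unfolding measurable_cong_sets[OF sets_joint_WS refl] by measurable (use assms in simp)

lemma prob_space_marg_W: "prob_space P_W"
  unfolding marg_W_def
  by (rule prob_space.prob_space_distr[OF prob_space_joint_WS measurable_fst_joint_WS])

lemma sets_marg_W: "sets P_W = sets W"
  unfolding marg_W_def by simp

lemma prob_space_joint_WZi: "i < n \<Longrightarrow> prob_space (P_WZ i)"
  unfolding joint_WZi_def
  by (rule prob_space.prob_space_distr[OF prob_space_joint_WS measurable_coordinate_joint_WS])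

lemma sets_joint_WZi: "sets (P_WZ i) = sets (W \<Otimes>\<^sub>M Z)"
  unfolding joint_WZi_def by simp

lemma prob_space_marg_W_pair: "prob_space (P_W \<Otimes>\<^sub>M \<mu>)"
  by (rule prob_space_pair[OF prob_space_marg_W prob_space_\<mu>])

lemma sets_marg_W_pair: "sets (P_W \<Otimes>\<^sub>M \<mu>) = sets (W \<Otimes>\<^sub>M Z)"
  by (rule sets_pair_measure_cong[OF sets_marg_W sets_\<mu>])

lemma
  fixes l :: "'w \<Rightarrow> 'z \<Rightarrow> real"
  assumes "i < n" and l_meas: "case_prod l \<in> borel_measurable (W \<Otimes>\<^sub>M Z)"
  shows integrable_joint_WZi_iff:
      "integrable (P_WZ i) (case_prod l) \<longleftrightarrow> integrable P_WS (\<lambda>ws. l (fst ws) (snd ws i))"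
    and integral_joint_WZi:
      "(\<integral>x. case_prod l x \<partial>P_WZ i) = (\<integral>ws. l (fst ws) (snd ws i) \<partial>P_WS)"
  using integrable_distr_eq[OF measurable_coordinate_joint_WS[OF assms(1)] l_meas]
    integral_distr[OF measurable_coordinate_joint_WS[OF assms(1)] l_meas]
  unfolding joint_WZi_def by (simp_all add: case_prod_unfold)

lemma
  fixes l :: "'w \<Rightarrow> 'z \<Rightarrow> real"
  assumes int_l: "integrable (P_W \<Otimes>\<^sub>M \<mu>) (case_prod l)"
  shows integrable_population_risk: "integrable P_WS (\<lambda>ws. \<integral>z. l (fst ws) z \<partial>\<mu>)"
    and integral_population_risk:
      "(\<integral>ws. (\<integral>z. l (fst ws) z \<partial>\<mu>) \<partial>P_WS) = (\<integral>x. case_prod l x \<partial>(P_W \<Otimes>\<^sub>M \<mu>))"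
proof -
  interpret P_W: prob_space P_W by (rule prob_space_marg_W)
  interpret \<mu>: prob_space \<mu> by (rule prob_space_\<mu>)
  interpret pair_sigma_finite P_W \<mu> ..
  define risk where "risk = (\<lambda>w. \<integral>z. l w z \<partial>\<mu>)"
  have int_risk: "integrable P_W risk"
    using integrable_fst'[OF int_l] unfolding risk_def by simp
  have risk_meas: "risk \<in> borel_measurable W"
    using borel_measurable_integrable[OF int_risk] measurable_cong_sets[OF sets_marg_W refl] by blast
  show "integrable P_WS (\<lambda>ws. \<integral>z. l (fst ws) z \<partial>\<mu>)"
    using int_risk integrable_distr_eq[OF measurable_fst_joint_WS risk_meas]
    unfolding marg_W_def risk_def by simp
  show "(\<integral>ws. (\<integral>z. l (fst ws) z \<partial>\<mu>) \<partial>P_WS) = (\<integral>x. case_prod l x \<partial>(P_W \<Otimes>\<^sub>M \<mu>))"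
    using integral_fst'[OF int_l] integral_distr[OF measurable_fst_joint_WS risk_meas]
    unfolding marg_W_def risk_def by simp
qed

lemma exp_gen_eq_average_gap:
  fixes l :: "'w \<Rightarrow> 'z \<Rightarrow> real"
  assumes n_pos: "n \<ge> 1" and l_meas: "case_prod l \<in> borel_measurable (W \<Otimes>\<^sub>M Z)"
    and int_prod: "integrable (P_W \<Otimes>\<^sub>M \<mu>) (case_prod l)"
    and int_WZ: "\<And>i. i < n \<Longrightarrow> integrable (P_WZ i) (case_prod l)"
  shows "exp_gen n W Z \<mu> K l = (1 / real n) *
    (\<Sum>i<n. (\<integral>x. case_prod l x \<partial>(P_W \<Otimes>\<^sub>M \<mu>)) - (\<integral>x. case_prod l x \<partial>P_WZ i))"
proof -
  have int_i: "integrable P_WS (\<lambda>ws. l (fst ws) (snd ws i))" if "i < n" for i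
    using int_WZ[OF that] integrable_joint_WZi_iff[OF that l_meas] by simp
  have int_sum: "integrable P_WS (\<lambda>ws. (1 / real n) * (\<Sum>i<n. l (fst ws) (snd ws i)))"
    using int_i by (intro integrable_mult_right Bochner_Integration.integrable_sum) auto
  have "exp_gen n W Z \<mu> K l = (\<integral>ws. (\<integral>z. l (fst ws) z \<partial>\<mu>) \<partial>P_WS)
      - (\<integral>ws. (1 / real n) * (\<Sum>i<n. l (fst ws) (snd ws i)) \<partial>P_WS)"
    unfolding exp_gen_def
    by (rule Bochner_Integration.integral_diff[OF integrable_population_risk[OF int_prod] int_sum])
  also have "\<dots> = (\<integral>ws. (\<integral>z. l (fst ws) z \<partial>\<mu>) \<partial>P_WS)
      - (1 / real n) * (\<Sum>i<n. \<integral>ws. l (fst ws) (snd ws i) \<partial>P_WS)"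
    using int_i by (simp add: Bochner_Integration.integral_sum)
  also have "\<dots> = (1 / real n) *
      (\<Sum>i<n. (\<integral>x. case_prod l x \<partial>(P_W \<Otimes>\<^sub>M \<mu>)) - (\<integral>x. case_prod l x \<partial>P_WZ i))"
    using n_pos integral_population_risk[OF int_prod] integral_joint_WZi[OF _ l_meas]
    by (simp add: sum_subtractf field_simps)
  finally show ?thesis .
qed

lemma risk_gap_le_KLdiv:
  fixes l :: "'w \<Rightarrow> 'z \<Rightarrow> real" and Q :: "('w \<times> 'z) measure"
  assumes i: "i < n" and Q: "prob_space Q" and sets_Q: "sets Q = sets (W \<Otimes>\<^sub>M Z)"
    and l_meas: "case_prod l \<in> borel_measurable (W \<Otimes>\<^sub>M Z)"
    and subg: "subgaussian Q (case_prod l) \<sigma>"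
    and fin: "KLdiv (P_W \<Otimes>\<^sub>M \<mu>) Q \<noteq> \<infinity>" "KLdiv (P_WZ i) Q \<noteq> \<infinity>"
  shows "integrable (P_W \<Otimes>\<^sub>M \<mu>) (case_prod l)" and "integrable (P_WZ i) (case_prod l)"
    and "\<bar>(\<integral>x. case_prod l x \<partial>(P_W \<Otimes>\<^sub>M \<mu>)) - (\<integral>x. case_prod l x \<partial>P_WZ i)\<bar>
      \<le> 2 * sqrt (\<sigma>\<^sup>2 * (real_of_ereal (KLdiv (P_W \<Otimes>\<^sub>M \<mu>) Q) + real_of_ereal (KLdiv (P_WZ i) Q)))"
proof -
  have sets_eq: "sets (P_W \<Otimes>\<^sub>M \<mu>) = sets Q" "sets (P_WZ i) = sets Q"
    using sets_marg_W_pair sets_joint_WZi sets_Q by simp_all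
  have l_meas_Q: "case_prod l \<in> borel_measurable Q"
    using l_meas measurable_cong_sets[OF sets_Q refl] by blast
  note prob = prob_space_marg_W_pair prob_space_joint_WZi[OF i]
  note dev_prod = subgaussian_KLdiv_deviation[OF prob(1) Q sets_eq(1) fin(1) l_meas_Q subg]
  note dev_WZ = subgaussian_KLdiv_deviation[OF prob(2) Q sets_eq(2) fin(2) l_meas_Q subg]
  show "integrable (P_W \<Otimes>\<^sub>M \<mu>) (case_prod l)" by (rule dev_prod(1))
  show "integrable (P_WZ i) (case_prod l)" by (rule dev_WZ(1))
  show "\<bar>(\<integral>x. case_prod l x \<partial>(P_W \<Otimes>\<^sub>M \<mu>)) - (\<integral>x. case_prod l x \<partial>P_WZ i)\<bar>
      \<le> 2 * sqrt (\<sigma>\<^sup>2 * (real_of_ereal (KLdiv (P_W \<Otimes>\<^sub>M \<mu>) Q) + real_of_ereal (KLdiv (P_WZ i) Q)))"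
    by (rule abs_diff_le_two_sqrt[OF dev_prod(2) dev_WZ(2)
          KLdiv_nonneg[OF prob(1) Q sets_eq(1) fin(1)] KLdiv_nonneg[OF prob(2) Q sets_eq(2) fin(2)]])
qed

end

theorem theorem2:
  fixes n :: nat and W :: "'w measure" and Z :: "'z measure" and \<mu> :: "'z measure"
    and K :: "(nat \<Rightarrow> 'z) \<Rightarrow> 'w measure"
    and l :: "'w \<Rightarrow> 'z \<Rightarrow> real"
    and Phat :: "nat \<Rightarrow> ('w \<times> 'z) measure"
    and \<sigma> :: real
  assumes n_pos: "n \<ge> 1"
    and mu_prob: "prob_space \<mu>" and mu_sets: "sets \<mu> = sets Z"
    and K_meas: "K \<in> sample_space n Z \<rightarrow>\<^sub>M prob_algebra W"
    and l_meas: "(\<lambda>(w, z). l w z) \<in> borel_measurable (W \<Otimes>\<^sub>M Z)"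
    and l_nonneg: "\<And>w z. l w z \<ge> 0"
    and Phat_prob: "\<And>i. i < n \<Longrightarrow> prob_space (Phat i)"
    and Phat_sets: "\<And>i. i < n \<Longrightarrow> sets (Phat i) = sets (W \<Otimes>\<^sub>M Z)"
    and Phat_subg: "\<And>i. i < n \<Longrightarrow> subgaussian (Phat i) (\<lambda>(w, z). l w z) \<sigma>"
  shows "(\<forall>i<n. KLdiv (marg_W n W Z \<mu> K \<Otimes>\<^sub>M \<mu>) (Phat i) \<noteq> \<infinity>
               \<and> KLdiv (joint_WZi n W Z \<mu> K i) (Phat i) \<noteq> \<infinity>) \<longrightarrow>
         \<bar>exp_gen n W Z \<mu> K l\<bar> \<le>
           (2 / real n) * (\<Sum>i<n. sqrt (\<sigma>\<^sup>2 *
              (real_of_ereal (KLdiv (marg_W n W Z \<mu> K \<Otimes>\<^sub>M \<mu>) (Phat i))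
               + real_of_ereal (KLdiv (joint_WZi n W Z \<mu> K i) (Phat i)))))"
proof
  assume fin: "\<forall>i<n. KLdiv (marg_W n W Z \<mu> K \<Otimes>\<^sub>M \<mu>) (Phat i) \<noteq> \<infinity>
               \<and> KLdiv (joint_WZi n W Z \<mu> K i) (Phat i) \<noteq> \<infinity>"
  interpret learning_setup n W Z \<mu> K
    unfolding learning_setup_def using mu_prob mu_sets K_meas by blast
  note gap = risk_gap_le_KLdiv[OF _ Phat_prob Phat_sets l_meas Phat_subg]
  have int_prod: "integrable (P_W \<Otimes>\<^sub>M \<mu>) (case_prod l)"
    using n_pos fin by (intro gap(1)[where i = 0]) auto
  have "exp_gen n W Z \<mu> K l = (1 / real n) * (\<Sum>i<n.
      (\<integral>x. case_prod l x \<partial>(P_W \<Otimes>\<^sub>M \<mu>)) - (\<integral>x. case_prod l x \<partial>P_WZ i))"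
    using fin by (intro exp_gen_eq_average_gap[OF n_pos l_meas int_prod] gap(2)) auto
  also have "\<bar>\<dots>\<bar> \<le> (1 / real n) * (\<Sum>i<n. 2 * sqrt (\<sigma>\<^sup>2 *
      (real_of_ereal (KLdiv (P_W \<Otimes>\<^sub>M \<mu>) (Phat i)) + real_of_ereal (KLdiv (P_WZ i) (Phat i)))))"
    using fin by (intro abs_mean_le gap(3)) auto
  finally show "\<bar>exp_gen n W Z \<mu> K l\<bar> \<le> (2 / real n) * (\<Sum>i<n. sqrt (\<sigma>\<^sup>2 *
      (real_of_ereal (KLdiv (marg_W n W Z \<mu> K \<Otimes>\<^sub>M \<mu>) (Phat i))
       + real_of_ereal (KLdiv (joint_WZi n W Z \<mu> K i) (Phat i)))))"
    by (simp add: sum_distrib_left[symmetric])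
qed

end
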